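(* For plane binary tree shapes $t$ let $S_t$, $T$ be as in the context. Then \[ \sum_{\substack{t \in \mathcal{B}_{\le n}\\ |t| < \log_4 n}} \left(1 - \frac{[z^n]S_t(z)}{[z^n]T(z)}\right) = \mathcal{O}\!\left(\frac{n}{(\log_4 n)^{3/2}}\right) \quad \text{as } n\to\infty . \]
   Context: A plane binary tree is a rooted tree in which each node has a left and a right slot, each empty or holding a subtree; $\mathcal{B}_{\le n}$ is the set of (unlabeled) plane binary trees with at most $n$ nodes, and $|t|$ is the number of nodes. A plane increasing binary tree of size $n$ is a plane binary tree whose $n$ nodes are labeled $1,\dots,n$ increasingly along every path from the root; their exponential generating function is $T(z)=z/(1-z)$, so $[z^n]T(z)=1$. A fringe subtree is a node with all its descendants; its shape is obtained by forgetting labels. For a shape $t$ with $k$ nodes, $\ell(t)$ is its number of increasing labelings (equal to $k!$ divided by the product of the sizes of all fringe subtrees of $t$) and $w(t)=\ell(t)/k!$. $S_t(z)$ is the exponential generating function of plane increasing binary trees having no fringe subtree of shape $t$; it is the power series solution of $S_t'(z)=(1+S_t(z))^2-w(t)kz^{k-1}$, $S_t(0)=0$. Thus $1-[z^n]S_t(z)/[z^n]T(z)$ is the probability that a uniformly random plane increasing binary tree of size $n$ has a fringe subtree of shape $t$. *)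

theory Defs
  imports "HOL-Library.Tree" "HOL-Computational_Algebra.Formal_Power_Series"
    "HOL-Library.Landau_Symbols" Complex_Main
begin

text \<open>Plane binary trees (shapes) are modelled as \<open>unit tree\<close>; \<open>Leaf\<close> is an empty slot,
  and \<open>size t\<close> is the number of nodes \<open>|t|\<close>.\<close>

type_synonym shape = "unit tree"

fun fringe_size_prod :: "shape \<Rightarrow> nat" where
  "fringe_size_prod Leaf = 1"
| "fringe_size_prod (Node l u r) = size (Node l u r) * fringe_size_prod l * fringe_size_prod r"

definition num_incr_labelings :: "shape \<Rightarrow> real" where
  "num_incr_labelings t = fact (size t) / real (fringe_size_prod t)"

definition wt :: "shape \<Rightarrow> real" where
  "wt t = num_incr_labelings t / fact (size t)"

definition T_egf :: "real fps" where
  "T_egf = fps_X * inverse (1 - fps_X)"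

definition S_egf :: "shape \<Rightarrow> real fps" where
  "S_egf t = (THE S. fps_nth S 0 = 0 \<and>
      fps_deriv S = (1 + S)^2 - fps_const (wt t * real (size t)) * fps_X ^ (size t - 1))"

end

theory Submission
  imports Defs
begin

text \<open>Every summand is a probability and hence lies in \<open>[0,1]\<close>: the coefficients of \<open>1 + S\<^sub>t\<close>
  obey a Riccati recursion that keeps them in \<open>[0,1]\<close> because \<open>w(t) |t| \<le> |t|\<close>. So the sum is
  at most the number of shapes with fewer than \<open>log 4 n\<close> nodes. Those with \<open>k\<close> nodes are
  counted by the Catalan number \<open>C\<^sub>k \<le> 4^k / (k+1)^(3/2)\<close>; this majorant grows geometrically,
  so its sum over \<open>k < log 4 n\<close> is at most a constant times its last term, which is
  \<open>O(n / (log 4 n)^(3/2))\<close>.\<close>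

unbundle fps_syntax

text \<open>The coefficients of \<open>U = 1 + S\<^sub>t\<close>, which solves \<open>U' = U\<^sup>2 - c z^m\<close>, \<open>U(0) = 1\<close>, with
  \<open>c = w(t) |t|\<close> and \<open>m = |t| - 1\<close>.\<close>

fun riccati_coeff :: "'a::field_char_0 \<Rightarrow> nat \<Rightarrow> nat \<Rightarrow> 'a" where
  "riccati_coeff c m 0 = 1"
| "riccati_coeff c m (Suc n) =
     ((\<Sum>i\<le>n. riccati_coeff c m i * riccati_coeff c m (n - i)) - (if n = m then c else 0))
     / of_nat (Suc n)"

lemma fps_riccati_iff:
  fixes U :: "'a::field_char_0 fps"
  shows "fps_deriv U = U\<^sup>2 - fps_const c * fps_X ^ m \<longleftrightarrow>
    (\<forall>n. of_nat (Suc n) * U $ Suc n = (\<Sum>i\<le>n. U $ i * U $ (n - i)) - (if n = m then c else 0))"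
proof -
  have "(U\<^sup>2) $ n = (\<Sum>i\<le>n. U $ i * U $ (n - i))" for n
    by (simp add: power2_eq_square fps_mult_nth atLeast0AtMost)
  then show ?thesis
    by (simp add: fps_eq_iff algebra_simps)
qed

lemma riccati_coeff_solves:
  fixes c :: "'a::field_char_0"
  shows "fps_deriv (Abs_fps (riccati_coeff c m)) =
    (Abs_fps (riccati_coeff c m))\<^sup>2 - fps_const c * fps_X ^ m"
  by (simp add: fps_riccati_iff del: of_nat_Suc)

lemma fps_riccati_unique:
  fixes U :: "'a::field_char_0 fps"
  assumes "U $ 0 = 1" and "fps_deriv U = U\<^sup>2 - fps_const c * fps_X ^ m"
  shows "U = Abs_fps (riccati_coeff c m)"
proof -
  have "U $ n = riccati_coeff c m n" for n
  proof (induction n rule: less_induct)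
    case (less n)
    show ?case
    proof (cases n)
      case 0
      with assms(1) show ?thesis by simp
    next
      case (Suc j)
      have "of_nat (Suc j) * U $ Suc j = (\<Sum>i\<le>j. U $ i * U $ (j - i)) - (if j = m then c else 0)"
        using assms(2) by (simp only: fps_riccati_iff)
      also have "(\<Sum>i\<le>j. U $ i * U $ (j - i)) = (\<Sum>i\<le>j. riccati_coeff c m i * riccati_coeff c m (j - i))"
        using Suc by (intro sum.cong) (auto simp: less)
      finally show ?thesis
        using Suc by (simp add: field_simps del: of_nat_Suc)
    qed
  qed
  then show ?thesis
    by (simp add: fps_eq_iff)
qed

lemma S_egf_eq_riccati:
  "S_egf t = Abs_fps (riccati_coeff (wt t * real (size t)) (size t - 1)) - 1"
proof -
  define c where "c = wt t * real (size t)"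
  define U where "U = Abs_fps (riccati_coeff c (size t - 1))"
  have "U - 1 = (THE S. S $ 0 = 0 \<and> fps_deriv S = (1 + S)\<^sup>2 - fps_const c * fps_X ^ (size t - 1))"
  proof (rule the_equality[symmetric])
    show "(U - 1) $ 0 = 0 \<and> fps_deriv (U - 1) = (1 + (U - 1))\<^sup>2 - fps_const c * fps_X ^ (size t - 1)"
      using riccati_coeff_solves[of c "size t - 1"] by (simp add: U_def)
  next
    fix S :: "real fps"
    assume "S $ 0 = 0 \<and> fps_deriv S = (1 + S)\<^sup>2 - fps_const c * fps_X ^ (size t - 1)"
    then have "1 + S = U"
      unfolding U_def by (intro fps_riccati_unique) auto
    then show "S = U - 1"
      by (simp add: algebra_simps)
  qed
  then show ?thesis
    by (simp add: S_egf_def U_def c_def)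
qed

lemma riccati_coeff_eq_1: "n \<le> m \<Longrightarrow> riccati_coeff c m n = 1"
proof (induction n rule: less_induct)
  case (less n)
  show ?case
  proof (cases n)
    case (Suc j)
    have "(\<Sum>i\<le>j. riccati_coeff c m i * riccati_coeff c m (j - i)) = (\<Sum>i\<le>j. 1)"
      using less Suc by (intro sum.cong) auto
    with less.prems Suc show ?thesis
      by (simp del: of_nat_Suc)
  qed simp
qed

lemma riccati_coeff_bounds:
  fixes c :: "'a::linordered_field"
  assumes "0 \<le> c" and "c \<le> of_nat (Suc m)"
  shows "0 \<le> riccati_coeff c m n \<and> riccati_coeff c m n \<le> 1"
proof (induction n rule: less_induct)
  case (less n)
  show ?case
  proof (cases n)
    case (Suc j)
    txt \<open>Up to index \<open>m\<close> all coefficients are \<open>1\<close>, so at index \<open>m + 1\<close> the convolution is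
      exactly \<open>m + 1\<close> and subtracting \<open>c \<le> m + 1\<close> keeps the quotient in \<open>[0,1]\<close>.\<close>
    define conv where "conv = (\<Sum>i\<le>j. riccati_coeff c m i * riccati_coeff c m (j - i))"
    have "0 \<le> conv"
      unfolding conv_def using less Suc by (intro sum_nonneg) auto
    moreover have "conv \<le> of_nat (Suc j)"
    proof -
      have "conv \<le> (\<Sum>i\<le>j. 1)"
        unfolding conv_def using less Suc by (intro sum_mono mult_le_one) auto
      then show ?thesis by simp
    qed
    moreover have "j = m \<Longrightarrow> conv = of_nat (Suc m)"
      unfolding conv_def by (simp add: riccati_coeff_eq_1)
    moreover have "riccati_coeff c m n = (conv - (if j = m then c else 0)) / of_nat (Suc j)"
      using Suc by (simp add: conv_def)
    ultimately show ?thesis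
      using assms by (auto simp: divide_le_eq simp del: of_nat_Suc)
  qed simp
qed

lemma fringe_size_prod_ge_1: "1 \<le> fringe_size_prod t"
  by (induction t) auto

lemma S_egf_nth_bounds: "0 \<le> S_egf t $ n \<and> S_egf t $ n \<le> 1"
proof -
  have "real (size t) / real (fringe_size_prod t) \<le> real (size t)"
    using fringe_size_prod_ge_1[of t] by (simp add: divide_le_eq mult_le_cancel_left1)
  then have "0 \<le> wt t * real (size t) \<and> wt t * real (size t) \<le> real (Suc (size t - 1))"
    by (simp add: wt_def num_incr_labelings_def)
  then show ?thesis
    using riccati_coeff_bounds[of "wt t * real (size t)" "size t - 1" n]
    by (simp add: S_egf_eq_riccati)
qed

lemma T_egf_nth: "T_egf $ n = (if n = 0 then 0 else 1)"
  by (cases n) (simp_all add: T_egf_def fps_inverse_one_minus_fps_X)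

lemma fringe_probability_bounds:
  assumes "1 \<le> n"
  shows "0 \<le> 1 - S_egf t $ n / T_egf $ n \<and> 1 - S_egf t $ n / T_egf $ n \<le> 1"
  using S_egf_nth_bounds[of t n] assms by (simp add: T_egf_nth)

lemma shapes_of_size_Suc:
  "{t::shape. size t = Suc k} =
    (\<Union>i\<le>k. (\<lambda>(l, r). Node l () r) ` ({l. size l = i} \<times> {r. size r = k - i}))"
proof (intro equalityI subsetI)
  fix t :: shape
  assume "t \<in> {t. size t = Suc k}"
  then obtain l r where "t = Node l () r" and "size l + size r = k"
    by (cases t) auto
  then show "t \<in> (\<Union>i\<le>k. (\<lambda>(l, r). Node l () r) ` ({l. size l = i} \<times> {r. size r = k - i}))"
    by (auto intro!: bexI[of _ "size l"] image_eqI[of _ _ "(l, r)"])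
qed auto

lemma finite_shapes_of_size: "finite {t::shape. size t = k}"
proof (induction k rule: less_induct)
  case (less k)
  show ?case
  proof (cases k)
    case 0
    then have "{t::shape. size t = k} = {Leaf}" by auto
    then show ?thesis by simp
  next
    case (Suc j)
    show ?thesis
      unfolding Suc shapes_of_size_Suc using less Suc by auto
  qed
qed

lemma card_shapes_of_size_Suc:
  "card {t::shape. size t = Suc k} =
    (\<Sum>i\<le>k. card {t::shape. size t = i} * card {t::shape. size t = k - i})"
proof -
  have "inj_on (\<lambda>(l, r). Node l () r) A" for A :: "(shape \<times> shape) set"
    by (auto simp: inj_on_def)
  then show ?thesis
    unfolding shapes_of_size_Suc
    by (subst card_UN_disjoint)
       (auto simp: finite_shapes_of_size card_image card_cartesian_product)
qed

text \<open>The generating function of the Catalan numbers is \<open>(1 - sqrt (1 - 4z)) / (2z)\<close>, so they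
  can be read off the coefficients \<open>(1/2 gchoose j) (-4)^j\<close> of \<open>sqrt (1 - 4z)\<close>.\<close>

definition sqrt_coeff :: "nat \<Rightarrow> real" where
  "sqrt_coeff j = ((1/2) gchoose j) * (-4) ^ j"

definition catalan :: "nat \<Rightarrow> real" where
  "catalan k = - sqrt_coeff (Suc k) / 2"

lemma sqrt_coeff_0: "sqrt_coeff 0 = 1"
  by (simp add: sqrt_coeff_def)

lemma sqrt_coeff_Suc: "sqrt_coeff (Suc j) = sqrt_coeff j * (4 * real j - 2) / (real j + 1)"
proof -
  have "(1/2::real) * ((1/2) gchoose j) = of_nat j * ((1/2) gchoose j) + of_nat (Suc j) * ((1/2) gchoose (Suc j))"
    by (rule gbinomial_mult_1)
  then have "(1/2::real) gchoose (Suc j) = (1/2 - real j) * ((1/2) gchoose j) / (real j + 1)"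
    by (simp add: field_simps)
  then show ?thesis
    unfolding sqrt_coeff_def by (simp only:) (simp add: field_simps)
qed

lemma sqrt_coeff_convolution:
  assumes "2 \<le> n"
  shows "(\<Sum>j\<le>n. sqrt_coeff j * sqrt_coeff (n - j)) = 0"
proof -
  have "(\<Sum>j\<le>n. sqrt_coeff j * sqrt_coeff (n - j)) =
      (\<Sum>j\<le>n. ((1/2::real) gchoose j) * ((1/2) gchoose (n - j))) * (-4) ^ n"
    unfolding sum_distrib_right
  proof (rule sum.cong)
    fix j assume "j \<in> {..n}"
    then have "(-4::real) ^ j * (-4) ^ (n - j) = (-4) ^ n"
      by (simp add: power_add[symmetric])
    then show "sqrt_coeff j * sqrt_coeff (n - j) = ((1/2) gchoose j) * ((1/2) gchoose (n - j)) * (-4) ^ n"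
      unfolding sqrt_coeff_def by (metis mult.assoc mult.left_commute)
  qed simp
  also have "\<dots> = ((1/2 + 1/2::real) gchoose n) * (-4) ^ n"
    using gbinomial_Vandermonde[of "1/2" "1/2" n] by (simp add: atLeast0AtMost)
  also have "(1/2 + 1/2::real) gchoose n = of_nat (1 choose n)"
    by (simp add: binomial_gbinomial)
  finally show ?thesis
    using assms by simp
qed

lemma catalan_0: "catalan 0 = 1"
  by (simp add: catalan_def sqrt_coeff_Suc sqrt_coeff_0)

lemma catalan_Suc: "catalan (Suc k) = catalan k * (4 * real k + 2) / (real k + 2)"
  unfolding catalan_def by (subst sqrt_coeff_Suc) (simp add: field_simps)

lemma catalan_convolution: "catalan (Suc k) = (\<Sum>i\<le>k. catalan i * catalan (k - i))"
proof -
  define F where "F j = sqrt_coeff j * sqrt_coeff (Suc (Suc k) - j)" for j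
  have sqrt_coeff_catalan: "sqrt_coeff (Suc i) = - 2 * catalan i" for i
    by (simp add: catalan_def)
  have "0 = (\<Sum>j\<le>Suc (Suc k). F j)"
    unfolding F_def by (rule sqrt_coeff_convolution[symmetric]) simp
  also have "\<dots> = F 0 + (\<Sum>i\<le>k. F (Suc i)) + F (Suc (Suc k))"
    by (subst sum.atMost_Suc_shift) simp
  also have "(\<Sum>i\<le>k. F (Suc i)) = 4 * (\<Sum>i\<le>k. catalan i * catalan (k - i))"
    unfolding sum_distrib_left
    by (rule sum.cong) (auto simp: F_def Suc_diff_le sqrt_coeff_catalan)
  also have "F 0 = - 2 * catalan (Suc k)"
    by (simp add: F_def sqrt_coeff_0 sqrt_coeff_catalan)
  also have "F (Suc (Suc k)) = - 2 * catalan (Suc k)"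
    by (simp add: F_def sqrt_coeff_0 sqrt_coeff_catalan)
  finally show ?thesis
    by simp
qed

lemma card_shapes_of_size: "real (card {t::shape. size t = k}) = catalan k"
proof (induction k rule: less_induct)
  case (less k)
  show ?case
  proof (cases k)
    case 0
    then have "{t::shape. size t = k} = {Leaf}" by auto
    with \<open>k = 0\<close> show ?thesis by (simp add: catalan_0)
  next
    case (Suc j)
    then show ?thesis
      by (simp add: card_shapes_of_size_Suc catalan_convolution less)
  qed
qed

lemma catalan_square_bound: "0 \<le> catalan k \<and> (catalan k)\<^sup>2 * (real k + 1) ^ 3 \<le> 16 ^ k"
proof (induction k)
  case 0
  then show ?case by (simp add: catalan_0)
next
  case (Suc k)
  have ratio: "catalan (Suc k) * (real k + 2) = catalan k * (4 * real k + 2)"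
    by (simp add: catalan_Suc)
  have "(catalan (Suc k))\<^sup>2 * (real (Suc k) + 1) ^ 3 = (catalan (Suc k) * (real k + 2))\<^sup>2 * (real k + 2)"
    by (simp add: power2_eq_square power3_eq_cube algebra_simps)
  also have "\<dots> = (catalan k)\<^sup>2 * (real k + 1) ^ 3 * ((4 * real k + 2)\<^sup>2 * (real k + 2) / (real k + 1) ^ 3)"
    unfolding ratio by (simp add: power_mult_distrib)
  also have "\<dots> \<le> 16 ^ k * 16"
  proof (rule mult_mono)
    have "(4 * real k + 2)\<^sup>2 * (real k + 2) \<le> 16 * (real k + 1) ^ 3"
      by (simp add: power2_eq_square power3_eq_cube algebra_simps)
    then show "(4 * real k + 2)\<^sup>2 * (real k + 2) / (real k + 1) ^ 3 \<le> 16"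
      by (simp add: divide_le_eq)
  qed (use Suc.IH in simp_all)
  also have "\<dots> = 16 ^ Suc k"
    by simp
  finally show ?case
    using Suc.IH by (simp add: catalan_Suc)
qed

lemma catalan_le: "catalan k \<le> 4 ^ k / ((real k + 1) * sqrt (real k + 1))"
proof -
  have "(catalan k * ((real k + 1) * sqrt (real k + 1)))\<^sup>2 = (catalan k)\<^sup>2 * (real k + 1) ^ 3"
    by (simp add: power_mult_distrib power2_eq_square power3_eq_cube)
  also have "\<dots> \<le> (4 ^ k)\<^sup>2"
    using catalan_square_bound[of k] by (simp add: power2_eq_square power_mult_distrib[symmetric])
  finally have "catalan k * ((real k + 1) * sqrt (real k + 1)) \<le> 4 ^ k"
    by (rule power2_le_imp_le) simp
  then show ?thesis
    by (simp add: le_divide_eq)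
qed

lemma sum_atMost_le_by_ratio:
  fixes f :: "nat \<Rightarrow> real"
  assumes nonneg: "\<And>k. 0 \<le> f k" and ratio: "\<And>k. f k \<le> q * f (Suc k)"
    and "0 \<le> q" "q < 1"
  shows "(\<Sum>k\<le>j. f k) \<le> f j / (1 - q)"
proof (induction j)
  case 0
  show ?case
    using assms by (simp add: le_divide_eq algebra_simps)
next
  case (Suc j)
  have "(\<Sum>k\<le>Suc j. f k) \<le> f j / (1 - q) + f (Suc j)"
    using Suc.IH by simp
  also have "\<dots> \<le> q * f (Suc j) / (1 - q) + f (Suc j)"
    using ratio[of j] \<open>q < 1\<close> by (simp add: divide_right_mono)
  also have "\<dots> = f (Suc j) / (1 - q)"
    using \<open>q < 1\<close> by (simp add: field_simps)
  finally show ?case .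
qed

lemma catalan_majorant_ratio:
  "4 ^ j / ((real j + 1) * sqrt (real j + 1)) \<le>
    3/4 * (4 ^ Suc j / ((real (Suc j) + 1) * sqrt (real (Suc j) + 1)))"
proof -
  define r where "r = real j + 1"
  have "r \<ge> 1" by (simp add: r_def)
  have "sqrt (r + 1) \<le> sqrt (9/4 * r)"
    using \<open>r \<ge> 1\<close> by simp
  also have "\<dots> = 3/2 * sqrt r"
    by (simp add: real_sqrt_mult real_sqrt_divide)
  finally have "(r + 1) * sqrt (r + 1) \<le> (2 * r) * (3/2 * sqrt r)"
    using \<open>r \<ge> 1\<close> by (intro mult_mono) auto
  then have "4 ^ j / (r * sqrt r) \<le> 3 * 4 ^ j / ((r + 1) * sqrt (r + 1))"
    using \<open>r \<ge> 1\<close> by (simp add: divide_simps mult_left_mono)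
  then show ?thesis
    by (simp add: r_def add.commute)
qed

lemma powr_three_halves: "0 \<le> x \<Longrightarrow> x powr (3/2) = x * sqrt (x::real)"
  using powr_add[of x 1 "1/2"] by (simp add: powr_half_sqrt)

lemma shapes_size_less_eq:
  assumes "0 < x"
  shows "{t::shape. real (size t) < x} = (\<Union>k\<le>nat \<lceil>x\<rceil> - 1. {t. size t = k})"
proof -
  have "real k < x \<longleftrightarrow> k \<le> nat \<lceil>x\<rceil> - 1" for k
    using assms by (simp add: less_ceiling_iff[symmetric]) linarith
  then show ?thesis
    by auto
qed

lemma finite_shapes_size_less: "0 < x \<Longrightarrow> finite {t::shape. real (size t) < x}"
  by (simp add: shapes_size_less_eq finite_shapes_of_size)

lemma card_shapes_size_less:
  assumes "0 < x"
  shows "real (card {t::shape. real (size t) < x}) \<le> 4 * 4 powr x / x powr (3/2)"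
proof -
  define j where "j = nat \<lceil>x\<rceil> - 1"
  have "card {t::shape. real (size t) < x} = (\<Sum>k\<le>j. card {t::shape. size t = k})"
    unfolding shapes_size_less_eq[OF assms] j_def
    by (rule card_UN_disjoint) (auto simp: finite_shapes_of_size)
  then have "real (card {t::shape. real (size t) < x}) = (\<Sum>k\<le>j. catalan k)"
    by (simp add: card_shapes_of_size)
  also have "\<dots> \<le> (\<Sum>k\<le>j. 4 ^ k / ((real k + 1) * sqrt (real k + 1)))"
    by (intro sum_mono catalan_le)
  also have "\<dots> \<le> 4 ^ j / ((real j + 1) * sqrt (real j + 1)) / (1 - 3/4)"
    by (rule sum_atMost_le_by_ratio) (simp_all only: catalan_majorant_ratio, simp_all)
  also have "\<dots> \<le> 4 powr x / (x * sqrt x) / (1 - 3/4)"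
  proof -
    have "real j < x" "x \<le> real j + 1"
      using assms by (simp_all add: j_def) linarith+
    then have "(4::real) ^ j \<le> 4 powr x" and "x * sqrt x \<le> (real j + 1) * sqrt (real j + 1)"
      using assms by (auto simp: powr_realpow[symmetric] intro: mult_mono)
    then have "4 ^ j / ((real j + 1) * sqrt (real j + 1)) \<le> 4 powr x / (x * sqrt x)"
      using assms by (intro frac_le) auto
    then show ?thesis
      by (rule divide_right_mono) simp
  qed
  finally show ?thesis
    using assms by (simp add: powr_three_halves mult.commute)
qed

theorem proposition3p7:
  shows "(\<lambda>n::nat. \<Sum>t\<in>{t::shape. 1 \<le> size t \<and> size t \<le> n \<and> real (size t) < log 4 (real n)}.
            1 - fps_nth (S_egf t) n / fps_nth T_egf n)
         \<in> O(\<lambda>n::nat. real n / (log 4 (real n)) powr (3/2))"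
proof (rule bigoI[where c = 4])
  show "\<forall>\<^sub>F n in at_top. norm (\<Sum>t\<in>{t::shape. 1 \<le> size t \<and> size t \<le> n \<and> real (size t) < log 4 (real n)}.
            1 - fps_nth (S_egf t) n / fps_nth T_egf n) \<le> 4 * norm (real n / (log 4 (real n)) powr (3/2))"
    using eventually_ge_at_top[of 2]
  proof eventually_elim
    case (elim n)
    define L where "L = log 4 (real n)"
    define A where "A = {t::shape. 1 \<le> size t \<and> size t \<le> n \<and> real (size t) < L}"
    have "0 < L"
      using elim by (simp add: L_def)
    have "norm (\<Sum>t\<in>A. 1 - S_egf t $ n / T_egf $ n) \<le> (\<Sum>t\<in>A. 1)"
      using elim fringe_probability_bounds by (intro sum_norm_le) auto
    also have "\<dots> \<le> real (card {t::shape. real (size t) < L})"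
      unfolding A_def using \<open>0 < L\<close> by (auto intro!: card_mono finite_shapes_size_less)
    also have "\<dots> \<le> 4 * 4 powr L / L powr (3/2)"
      using \<open>0 < L\<close> by (rule card_shapes_size_less)
    also have "\<dots> = 4 * norm (real n / L powr (3/2))"
      using elim by (simp add: L_def)
    finally show ?case
      by (simp add: A_def L_def)
  qed
qed

end
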